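(* For every integer $k\ge 1$, the choice index (list chromatic index) of the generalised Petersen graph $GP(3k,k)$ equals its chromatic index; that is, the list-colouring conjecture holds for $GP(3k,k)$.
   Context: For integers $n,k$ with $1\le k<n/2$, the generalised Petersen graph $GP(n,k)$ has vertex set $\{u_i,v_i : i\in\mathbb{Z}_n\}$ and edge set $\{u_iu_{i+1},\ u_iv_i,\ v_iv_{i+k} : i\in\mathbb{Z}_n\}$. The chromatic index of a graph is the least number of colours in a proper edge colouring. The choice index is the least $\ell$ such that for every assignment of lists $L_e$ of $\ell$ colours to the edges $e$, there is a proper edge colouring in which every edge $e$ receives a colour from $L_e$. *)

theory Defs
  imports Main
begin

text \<open>Vertices of GP(n,k): (False, i) is u_i and (True, i) is v_i, for i < n.
  Edges are represented as two-element vertex sets; indices are taken mod n.\<close>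

definition gp_vertices :: "nat \<Rightarrow> (bool \<times> nat) set" where
  "gp_vertices n = UNIV \<times> {..<n}"

definition gp_edges :: "nat \<Rightarrow> nat \<Rightarrow> (bool \<times> nat) set set" where
  "gp_edges n k =
     (\<Union>i<n. {{(False, i), (False, (i + 1) mod n)},
               {(False, i), (True, i)},
               {(True, i), (True, (i + k) mod n)}})"

definition proper_edge_colouring :: "'a set set \<Rightarrow> ('a set \<Rightarrow> 'c) \<Rightarrow> bool" where
  "proper_edge_colouring E c \<longleftrightarrow>
     (\<forall>e\<in>E. \<forall>e'\<in>E. e \<noteq> e' \<and> e \<inter> e' \<noteq> {} \<longrightarrow> c e \<noteq> c e')"

definition chromatic_index :: "'a set set \<Rightarrow> nat" where
  "chromatic_index E =
     (LEAST m. \<exists>c :: 'a set \<Rightarrow> nat. proper_edge_colouring E c \<and> (\<forall>e\<in>E. c e < m))"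

definition choice_index :: "'a set set \<Rightarrow> nat" where
  "choice_index E =
     (LEAST l. \<forall>L :: 'a set \<Rightarrow> nat set. (\<forall>e\<in>E. finite (L e) \<and> card (L e) = l) \<longrightarrow>
        (\<exists>c :: 'a set \<Rightarrow> nat. proper_edge_colouring E c \<and> (\<forall>e\<in>E. c e \<in> L e)))"

end

theory Submission
  imports Defs "HOL-Library.FuncSet" Complex_Main
begin

text \<open>By the coefficient formula of the Combinatorial Nullstellensatz, the edges of GP(3k,k)
  can be coloured from any lists of size 3 as soon as some orientation of its line graph has a graph
  polynomial whose coefficient at the product of all x_e^2 is non-zero; the line graph is 4-regular,
  so this monomial has top degree. That coefficient equals the interpolation sum of the graph
  polynomial over the grid {0,1,2}^E. Grouping the 9k edges into k columns of nine, the sum becomes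
  the trace of the k-th power of a 27 \<times> 27 transfer matrix T acting on the colours of the three
  outer edges of a column, twisted by a rotation of these colours where the columns wrap around.
  Since T^3 = -3T, these twisted traces t(n) satisfy t(n+3) = -3 t(n+1), and t(1) = -6,
  t(2) = 24, so they never vanish. Three edges meet at every vertex, so both the choice index and the
  chromatic index equal 3.\<close>

section \<open>Coefficient formula of the Combinatorial Nullstellensatz\<close>

definition lagrange_denom :: "real set \<Rightarrow> real \<Rightarrow> real" where
  "lagrange_denom A x = (\<Prod>b\<in>A - {x}. x - b)"

lemma sum_power_div_lagrange_denom:
  assumes "finite A" "card A = 3" "d \<le> 2"
  shows "(\<Sum>x\<in>A. x ^ d / lagrange_denom A x) = (if d = 2 then 1 else 0)"
proof -
  obtain x y z where A: "A = {x, y, z}" and xyz: "x \<noteq> y" "x \<noteq> z" "y \<noteq> z"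
    using assms(2) by (auto simp: card_3_iff)
  have sum: "(\<Sum>x\<in>A. x ^ d / lagrange_denom A x)
      = x ^ d / ((x - y) * (x - z)) + y ^ d / ((y - x) * (y - z)) + z ^ d / ((z - x) * (z - y))"
    using xyz by (simp add: A lagrange_denom_def insert_Diff_if insert_commute)
  from assms(3) consider "d = 0" | "d = 1" | "d = 2" by linarith
  then show ?thesis
    unfolding sum using xyz
    by cases (simp_all add: divide_simps, (simp add: algebra_simps power2_eq_square)+)
qed

lemma prod_sum_power_div_lagrange_denom:
  fixes d :: "'i \<Rightarrow> nat"
  assumes I: "finite I" and deg: "(\<Sum>i\<in>I. d i) = 2 * card I"
    and L: "\<forall>i\<in>I. finite (L i) \<and> card (L i) = 3"
  shows "(\<Prod>i\<in>I. \<Sum>x\<in>L i. x ^ d i / lagrange_denom (L i) x) = (if \<forall>i\<in>I. d i = 2 then 1 else 0)"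
proof (cases "\<forall>i\<in>I. d i = 2")
  case True
  then show ?thesis using L by (simp add: sum_power_div_lagrange_denom)
next
  case False
  have "\<exists>i\<in>I. d i < 2"
  proof (rule ccontr)
    assume "\<not> (\<exists>i\<in>I. d i < 2)"
    then have ge: "\<forall>i\<in>I. 2 \<le> d i" by auto
    with False obtain i0 where "i0 \<in> I" "2 < d i0" by force
    then have "(\<Sum>i\<in>I. 2) < (\<Sum>i\<in>I. d i)"
      using I ge by (intro sum_strict_mono_ex1) auto
    with deg show False by simp
  qed
  then obtain i where i: "i \<in> I" "d i < 2" by blast
  then have "(\<Sum>x\<in>L i. x ^ d i / lagrange_denom (L i) x) = 0"
    using L by (simp add: sum_power_div_lagrange_denom)
  then have "(\<Prod>i\<in>I. \<Sum>x\<in>L i. x ^ d i / lagrange_denom (L i) x) = 0"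
    using i I by (metis (no_types, lifting) prod_zero_iff)
  then show ?thesis using False by simp
qed

text \<open>The graph polynomial of a digraph with vertex set I and arcs J (arc j runs from src j to
  tgt j) is the product of x_(src j) - x_(tgt j) over all arcs. Expanding it by choosing one end of
  every arc, the coefficient of the product of x_i^2 is the following signed count.\<close>

definition chosen_end :: "('j \<Rightarrow> 'i) \<Rightarrow> ('j \<Rightarrow> 'i) \<Rightarrow> ('j \<Rightarrow> bool) \<Rightarrow> 'j \<Rightarrow> 'i" where
  "chosen_end src tgt \<sigma> j = (if \<sigma> j then src j else tgt j)"

definition chosen_degree :: "'j set \<Rightarrow> ('j \<Rightarrow> 'i) \<Rightarrow> ('j \<Rightarrow> 'i) \<Rightarrow> ('j \<Rightarrow> bool) \<Rightarrow> 'i \<Rightarrow> nat" where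
  "chosen_degree J src tgt \<sigma> i = card {j\<in>J. chosen_end src tgt \<sigma> j = i}"

definition choice_sign :: "'j set \<Rightarrow> ('j \<Rightarrow> bool) \<Rightarrow> real" where
  "choice_sign J \<sigma> = (\<Prod>j\<in>J. if \<sigma> j then 1 else -1)"

definition graph_poly_square_coeff :: "'i set \<Rightarrow> 'j set \<Rightarrow> ('j \<Rightarrow> 'i) \<Rightarrow> ('j \<Rightarrow> 'i) \<Rightarrow> real" where
  "graph_poly_square_coeff I J src tgt =
     (\<Sum>\<sigma>\<in>PiE J (\<lambda>_. UNIV). choice_sign J \<sigma> * (if \<forall>i\<in>I. chosen_degree J src tgt \<sigma> i = 2 then 1 else 0))"

definition graph_poly_sum :: "'i set \<Rightarrow> 'j set \<Rightarrow> ('j \<Rightarrow> 'i) \<Rightarrow> ('j \<Rightarrow> 'i) \<Rightarrow> ('i \<Rightarrow> real set) \<Rightarrow> real" where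
  "graph_poly_sum I J src tgt L =
     (\<Sum>c\<in>PiE I L. (\<Prod>j\<in>J. c (src j) - c (tgt j)) / (\<Prod>i\<in>I. lagrange_denom (L i) (c i)))"

lemma prod_diff_eq_sum_chosen_ends:
  assumes "finite J" "finite I" "\<forall>j\<in>J. src j \<in> I \<and> tgt j \<in> I"
  shows "(\<Prod>j\<in>J. c (src j) - c (tgt j)) =
    (\<Sum>\<sigma>\<in>PiE J (\<lambda>_. UNIV). choice_sign J \<sigma> * (\<Prod>i\<in>I. (c i :: real) ^ chosen_degree J src tgt \<sigma> i))"
proof -
  have "(\<Prod>j\<in>J. c (src j) - c (tgt j)) = (\<Prod>j\<in>J. \<Sum>b\<in>UNIV. if b then c (src j) else - c (tgt j))"
    by (simp add: UNIV_bool)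
  also have "\<dots> = (\<Sum>\<sigma>\<in>PiE J (\<lambda>_. UNIV). \<Prod>j\<in>J. if \<sigma> j then c (src j) else - c (tgt j))"
    using assms(1) by (intro prod_sum_PiE) auto
  also have "\<dots> = (\<Sum>\<sigma>\<in>PiE J (\<lambda>_. UNIV). \<Prod>j\<in>J. (if \<sigma> j then 1 else -1) * c (chosen_end src tgt \<sigma> j))"
    by (intro sum.cong prod.cong refl) (simp add: chosen_end_def)
  also have "\<dots> = (\<Sum>\<sigma>\<in>PiE J (\<lambda>_. UNIV). choice_sign J \<sigma> * (\<Prod>j\<in>J. c (chosen_end src tgt \<sigma> j)))"
    by (simp add: choice_sign_def prod.distrib)
  also have "\<dots> = (\<Sum>\<sigma>\<in>PiE J (\<lambda>_. UNIV). choice_sign J \<sigma> * (\<Prod>i\<in>I. c i ^ chosen_degree J src tgt \<sigma> i))"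
  proof (intro sum.cong refl arg_cong[where f = "\<lambda>x. _ * x"])
    fix \<sigma>
    have "(\<Prod>j\<in>J. c (chosen_end src tgt \<sigma> j))
        = (\<Prod>i\<in>I. \<Prod>j\<in>{j\<in>J. chosen_end src tgt \<sigma> j = i}. c (chosen_end src tgt \<sigma> j))"
      using assms by (intro prod.group[symmetric]) (auto simp: chosen_end_def)
    also have "\<dots> = (\<Prod>i\<in>I. \<Prod>j\<in>{j\<in>J. chosen_end src tgt \<sigma> j = i}. c i)"
      by (intro prod.cong refl) auto
    also have "\<dots> = (\<Prod>i\<in>I. c i ^ chosen_degree J src tgt \<sigma> i)"
      by (simp add: chosen_degree_def)
    finally show "(\<Prod>j\<in>J. c (chosen_end src tgt \<sigma> j)) = \<dots>" .
  qed
  finally show ?thesis .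
qed

lemma sum_chosen_degree:
  assumes "finite J" "finite I" "\<forall>j\<in>J. src j \<in> I \<and> tgt j \<in> I"
  shows "(\<Sum>i\<in>I. chosen_degree J src tgt \<sigma> i) = card J"
proof -
  have "(\<Sum>i\<in>I. \<Sum>j\<in>{j\<in>J. chosen_end src tgt \<sigma> j = i}. 1) = (\<Sum>j\<in>J. 1 :: nat)"
    using assms by (intro sum.group) (auto simp: chosen_end_def)
  then show ?thesis by (simp add: chosen_degree_def)
qed

theorem graph_poly_sum_eq_square_coeff:
  assumes I: "finite I" and J: "finite J" and card_J: "card J = 2 * card I"
    and ends: "\<forall>j\<in>J. src j \<in> I \<and> tgt j \<in> I"
    and L: "\<forall>i\<in>I. finite (L i) \<and> card (L i) = 3"
  shows "graph_poly_sum I J src tgt L = graph_poly_square_coeff I J src tgt"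
proof -
  let ?d = "chosen_degree J src tgt"
  have "graph_poly_sum I J src tgt L = (\<Sum>c\<in>PiE I L. \<Sum>\<sigma>\<in>PiE J (\<lambda>_. UNIV).
          choice_sign J \<sigma> * (\<Prod>i\<in>I. c i ^ ?d \<sigma> i / lagrange_denom (L i) (c i)))"
    unfolding graph_poly_sum_def prod_diff_eq_sum_chosen_ends[OF J I ends]
    by (simp add: sum_divide_distrib prod_dividef)
  also have "\<dots> = (\<Sum>\<sigma>\<in>PiE J (\<lambda>_. UNIV). choice_sign J \<sigma> *
                    (\<Sum>c\<in>PiE I L. \<Prod>i\<in>I. c i ^ ?d \<sigma> i / lagrange_denom (L i) (c i)))"
    by (subst sum.swap) (simp add: sum_distrib_left)
  also have "\<dots> = (\<Sum>\<sigma>\<in>PiE J (\<lambda>_. UNIV). choice_sign J \<sigma> *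
                    (\<Prod>i\<in>I. \<Sum>x\<in>L i. x ^ ?d \<sigma> i / lagrange_denom (L i) x))"
    using I L by (subst prod_sum_PiE) auto
  also have "\<dots> = graph_poly_square_coeff I J src tgt"
    unfolding graph_poly_square_coeff_def
    using sum_chosen_degree[OF J I ends] card_J
    by (intro sum.cong refl arg_cong[where f = "\<lambda>x. _ * x"] prod_sum_power_div_lagrange_denom[OF I _ L])
      simp
  finally show ?thesis .
qed

corollary choosable_if_graph_poly_sum_nonzero:
  fixes L :: "'i \<Rightarrow> real set"
  assumes I: "finite I" and J: "finite J" and card_J: "card J = 2 * card I"
    and ends: "\<forall>j\<in>J. src j \<in> I \<and> tgt j \<in> I"
    and nonzero: "graph_poly_sum I J src tgt (\<lambda>_. {0, 1, 2}) \<noteq> 0"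
    and L: "\<forall>i\<in>I. finite (L i) \<and> card (L i) = 3"
  obtains c where "c \<in> PiE I L" "\<forall>j\<in>J. c (src j) \<noteq> c (tgt j)"
proof -
  have "graph_poly_sum I J src tgt L \<noteq> 0"
    using nonzero graph_poly_sum_eq_square_coeff[OF I J card_J ends] L by simp
  then obtain c where "c \<in> PiE I L" "(\<Prod>j\<in>J. c (src j) - c (tgt j)) \<noteq> 0"
    unfolding graph_poly_sum_def by (metis (no_types, lifting) divide_eq_0_iff sum.neutral)
  then show thesis using J by (intro that) (auto simp: prod_zero_iff)
qed

section \<open>The edges and the oriented line graph of GP(3k,k)\<close>

text \<open>Indexing the edges of GP(3k,k): the edge (j, q) with j < k and q < 9 sits at position
  p = (q mod 3) * k + j and is the outer edge u_p u_(p+1) for q < 3, the spoke u_p v_p for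
  3 \<le> q < 6 and the inner edge v_p v_(p+k) for 6 \<le> q. Column j collects the nine edges at the
  positions j, k + j and 2k + j; its three inner edges form a triangle.\<close>

definition gp_edge_index :: "nat \<Rightarrow> (nat \<times> nat) set" where
  "gp_edge_index k = {..<k} \<times> {..<9}"

fun gp_edge_at :: "nat \<Rightarrow> nat \<times> nat \<Rightarrow> (bool \<times> nat) set" where
  "gp_edge_at k (j, q) = (let p = (q mod 3) * k + j in
     if q < 3 then {(False, p), (False, (p + 1) mod (3 * k))}
     else if q < 6 then {(False, p), (True, p)}
     else {(True, p), (True, (p + k) mod (3 * k))})"

lemma position_lt: "j < k \<Longrightarrow> m < 3 \<Longrightarrow> m * k + j < 3 * (k :: nat)"
proof -
  assume "j < k" "m < 3"
  then have "m * k + j < (m + 1) * k" by simp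
  also have "\<dots> \<le> 3 * k" using \<open>m < 3\<close> by (intro mult_right_mono) auto
  finally show ?thesis .
qed

lemma position_cases:
  assumes "p < 3 * (k :: nat)"
  obtains j m where "j < k" "m < 3" "p = m * k + j"
proof
  show "p mod k < k" "p div k < 3" using assms by (auto simp: less_mult_imp_div_less mult.commute)
qed simp

lemma gp_edge_at_column:
  assumes "m < 3"
  shows "gp_edge_at k (j, m) = {(False, m * k + j), (False, (m * k + j + 1) mod (3 * k))}"
    and "gp_edge_at k (j, 3 + m) = {(False, m * k + j), (True, m * k + j)}"
    and "gp_edge_at k (j, 6 + m) = {(True, m * k + j), (True, (m * k + j + k) mod (3 * k))}"
proof -
  have "(3 + m) mod 3 = m" "(6 + m) mod 3 = m" using assms by presburger+
  then show "gp_edge_at k (j, m) = {(False, m * k + j), (False, (m * k + j + 1) mod (3 * k))}"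
    and "gp_edge_at k (j, 3 + m) = {(False, m * k + j), (True, m * k + j)}"
    and "gp_edge_at k (j, 6 + m) = {(True, m * k + j), (True, (m * k + j + k) mod (3 * k))}"
    using assms by (simp_all add: Let_def)
qed

lemma gp_edge_index_cases:
  assumes "(j, q) \<in> gp_edge_index k"
  obtains m where "j < k" "m < 3" "q = m \<or> q = 3 + m \<or> q = 6 + m"
proof
  show "j < k" "q mod 3 < 3" using assms by (auto simp: gp_edge_index_def)
  show "q = q mod 3 \<or> q = 3 + q mod 3 \<or> q = 6 + q mod 3"
    using assms by (simp add: gp_edge_index_def) presburger
qed

lemma column_edges_in_gp_edge_index:
  "j < k \<Longrightarrow> m < 3 \<Longrightarrow> (j, m) \<in> gp_edge_index k \<and> (j, 3 + m) \<in> gp_edge_index k \<and> (j, 6 + m) \<in> gp_edge_index k"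
  by (simp add: gp_edge_index_def)

lemma gp_edges_memI:
  assumes "p < n"
  shows "{(False, p), (False, (p + 1) mod n)} \<in> gp_edges n k"
    and "{(False, p), (True, p)} \<in> gp_edges n k"
    and "{(True, p), (True, (p + k) mod n)} \<in> gp_edges n k"
  using assms unfolding gp_edges_def by blast+

lemma gp_edge_at_image: "gp_edge_at k ` gp_edge_index k = gp_edges (3 * k) k"
proof
  show "gp_edge_at k ` gp_edge_index k \<subseteq> gp_edges (3 * k) k"
  proof
    fix e assume "e \<in> gp_edge_at k ` gp_edge_index k"
    then obtain j q where jq: "(j, q) \<in> gp_edge_index k" "e = gp_edge_at k (j, q)" by auto
    from jq(1) obtain m where jm: "j < k" "m < 3" and q: "q = m \<or> q = 3 + m \<or> q = 6 + m"
      by (rule gp_edge_index_cases)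
    have "m * k + j < 3 * k" using jm by (rule position_lt)
    then show "e \<in> gp_edges (3 * k) k"
      using q gp_edges_memI gp_edge_at_column[OF jm(2)] unfolding jq(2) by (elim disjE) simp_all
  qed
next
  show "gp_edges (3 * k) k \<subseteq> gp_edge_at k ` gp_edge_index k"
  proof
    fix e assume "e \<in> gp_edges (3 * k) k"
    then obtain p where p: "p < 3 * k" and e: "e = {(False, p), (False, (p + 1) mod (3 * k))} \<or>
        e = {(False, p), (True, p)} \<or> e = {(True, p), (True, (p + k) mod (3 * k))}"
      unfolding gp_edges_def by auto
    from p obtain j m where jm: "j < k" "m < 3" "p = m * k + j" by (rule position_cases)
    show "e \<in> gp_edge_at k ` gp_edge_index k"
      using e column_edges_in_gp_edge_index[OF jm(1,2)] gp_edge_at_column[OF jm(2)]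
      unfolding jm(3) by (elim disjE) (metis image_eqI)+
  qed
qed

text \<open>The index of the outer edge u_(p-1) u_p, where p = m * k + j.\<close>

definition outer_pred :: "nat \<Rightarrow> nat \<Rightarrow> nat \<Rightarrow> nat \<times> nat" where
  "outer_pred k j m = (if j = 0 then (k - 1, (m + 2) mod 3) else (j - 1, m))"

fun edge_indices_at :: "nat \<Rightarrow> bool \<times> nat \<Rightarrow> (nat \<times> nat) set" where
  "edge_indices_at k (b, p) = (let j = p mod k; m = p div k in
     if b then {(j, 6 + m), (j, 6 + (m + 2) mod 3), (j, 3 + m)}
     else {(j, m), outer_pred k j m, (j, 3 + m)})"

lemma edge_indices_at_column:
  assumes "j < k" "m < 3"
  shows "edge_indices_at k (False, m * k + j) = {(j, m), outer_pred k j m, (j, 3 + m)}"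
    and "edge_indices_at k (True, m * k + j) = {(j, 6 + m), (j, 6 + (m + 2) mod 3), (j, 3 + m)}"
  using assms by (simp_all add: add.commute)

lemma outer_successor:
  assumes "j < k" "m < 3"
  obtains j' m' where "j' < k" "m' < 3" "(m * k + j + 1) mod (3 * k) = m' * k + j'"
    "outer_pred k j' m' = (j, m)"
proof -
  consider "j + 1 < k" | "j + 1 = k" "m < 2" | "j + 1 = k" "m = 2" using assms by linarith
  then show thesis
  proof cases
    case 1
    have "m * k + (j + 1) < 3 * k" using 1 assms(2) by (rule position_lt)
    with 1 assms(2) show thesis by (intro that[of "j + 1" m]) (simp_all add: outer_pred_def)
  next
    case 2
    have "m * k + j + 1 = (m + 1) * k" using 2 by simp
    moreover have "(m + 1) * k < 3 * k" using 2 assms by (intro mult_strict_right_mono) auto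
    ultimately have "(m * k + j + 1) mod (3 * k) = (m + 1) * k + 0" by (metis add_0_right mod_less)
    then show thesis by (rule that[rotated 2]) (use 2 in \<open>auto simp: outer_pred_def\<close>)
  next
    case 3
    then have "m * k + j + 1 = 3 * k" by simp
    then have "(m * k + j + 1) mod (3 * k) = 0 * k + 0" by simp
    then show thesis by (rule that[rotated 2]) (use 3 in \<open>auto simp: outer_pred_def\<close>)
  qed
qed

lemma inner_successor:
  fixes k :: nat
  assumes "j < k" "m < 3"
  obtains m' where "m' < 3" "(m * k + j + k) mod (3 * k) = m' * k + j" "(m' + 2) mod 3 = m"
proof -
  consider "m < 2" | "m = 2" using assms by linarith
  then show thesis
  proof cases
    case 1
    have "(m + 1) * k + j < 3 * k" using 1 assms by (intro position_lt) auto
    with 1 show thesis by (intro that[of "m + 1"]) auto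
  next
    case 2
    then show thesis using assms by (intro that[of 0]) auto
  qed
qed

lemma mem_edge_indices_at:
  assumes i: "i \<in> gp_edge_index k" and x: "x \<in> gp_edge_at k i"
  shows "snd x < 3 * k \<and> i \<in> edge_indices_at k x"
proof -
  obtain j q where jq: "i = (j, q)" by force
  from i obtain m where jm: "j < k" "m < 3" and q: "q = m \<or> q = 3 + m \<or> q = 6 + m"
    unfolding jq by (rule gp_edge_index_cases)
  have p: "m * k + j < 3 * k" using jm by (rule position_lt)
  note column = gp_edge_at_column[OF jm(2)] edge_indices_at_column[OF jm]
  obtain j' m' where j'm': "j' < k" "m' < 3" "(m * k + j + 1) mod (3 * k) = m' * k + j'"
    "outer_pred k j' m' = (j, m)"
    using jm by (rule outer_successor)
  obtain m'' where m'': "m'' < 3" "(m * k + j + k) mod (3 * k) = m'' * k + j" "(m'' + 2) mod 3 = m"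
    using jm by (rule inner_successor)
  have p': "m' * k + j' < 3 * k" and p'': "m'' * k + j < 3 * k"
    using j'm' m'' jm by (simp_all add: position_lt)
  from q consider (outer) "q = m" | (spoke) "q = 3 + m" | (inner) "q = 6 + m" by blast
  then show ?thesis
  proof cases
    case outer
    with x have "x = (False, m * k + j) \<or> x = (False, m' * k + j')"
      using column j'm'(3) by (simp add: jq)
    then show ?thesis
      using outer p p' column edge_indices_at_column[OF j'm'(1,2)] j'm'(4) by (auto simp: jq)
  next
    case spoke
    with x have "x = (False, m * k + j) \<or> x = (True, m * k + j)" using column by (simp add: jq)
    then show ?thesis using spoke p column by (auto simp: jq)
  next
    case inner
    with x have "x = (True, m * k + j) \<or> x = (True, m'' * k + j)"
      using column m''(2) by (simp add: jq)
    then show ?thesis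
      using inner p p'' column edge_indices_at_column[OF jm(1) m''(1)] m''(3) by (auto simp: jq)
  qed
qed

text \<open>The line graph of GP(3k,k), oriented: the arc (j, 6m + a) joins two of the three edges at
  u_p (if a < 3) or at v_p (if a \<ge> 3), where p = m * k + j.\<close>

definition gp_arc_index :: "nat \<Rightarrow> (nat \<times> nat) set" where
  "gp_arc_index k = {..<k} \<times> {..<18}"

fun gp_arc :: "nat \<Rightarrow> nat \<times> nat \<Rightarrow> (nat \<times> nat) \<times> (nat \<times> nat)" where
  "gp_arc k (j, r) = (let m = r div 6; a = r mod 6; u = outer_pred k j m; v = (j, 6 + (m + 2) mod 3) in
     if a = 0 then (u, (j, m)) else if a = 1 then (u, (j, 3 + m)) else if a = 2 then ((j, m), (j, 3 + m))
     else if a = 3 then (v, (j, 6 + m)) else if a = 4 then (v, (j, 3 + m)) else ((j, 6 + m), (j, 3 + m)))"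

definition arc_src :: "nat \<Rightarrow> nat \<times> nat \<Rightarrow> nat \<times> nat" where
  "arc_src k r = fst (gp_arc k r)"

definition arc_tgt :: "nat \<Rightarrow> nat \<times> nat \<Rightarrow> nat \<times> nat" where
  "arc_tgt k r = snd (gp_arc k r)"

lemma card_gp_arc_index: "card (gp_arc_index k) = 2 * card (gp_edge_index k)"
  by (simp add: gp_arc_index_def gp_edge_index_def card_cartesian_product)

lemma arc_ends_in_gp_edge_index:
  assumes "k \<ge> 1" "r \<in> gp_arc_index k"
  shows "arc_src k r \<in> gp_edge_index k \<and> arc_tgt k r \<in> gp_edge_index k"
proof -
  obtain j r' where r: "r = (j, r')" "j < k" "r' < 18" using assms(2) by (auto simp: gp_arc_index_def)
  have "r' div 6 < 3" using r(3) by auto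
  moreover from this have "outer_pred k j (r' div 6) \<in> gp_edge_index k"
    using assms(1) r(2) by (auto simp: outer_pred_def gp_edge_index_def)
  ultimately show ?thesis
    using r by (auto simp: arc_src_def arc_tgt_def Let_def gp_edge_index_def)
qed

lemma arcs_at_vertex:
  assumes "j < k" "m < 3"
  shows "{arc_src k (j, 6 * m), arc_tgt k (j, 6 * m)} = {(j, m), outer_pred k j m}"
    and "{arc_src k (j, 6 * m + 1), arc_tgt k (j, 6 * m + 1)} = {outer_pred k j m, (j, 3 + m)}"
    and "{arc_src k (j, 6 * m + 2), arc_tgt k (j, 6 * m + 2)} = {(j, m), (j, 3 + m)}"
    and "{arc_src k (j, 6 * m + 3), arc_tgt k (j, 6 * m + 3)} = {(j, 6 + m), (j, 6 + (m + 2) mod 3)}"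
    and "{arc_src k (j, 6 * m + 4), arc_tgt k (j, 6 * m + 4)} = {(j, 6 + (m + 2) mod 3), (j, 3 + m)}"
    and "{arc_src k (j, 6 * m + 5), arc_tgt k (j, 6 * m + 5)} = {(j, 6 + m), (j, 3 + m)}"
proof -
  have "(6 * m + a) div 6 = m \<and> (6 * m + a) mod 6 = a" if "a < 6" for a
    using that by simp
  from this[of 1] this[of 2] this[of 3] this[of 4] this[of 5] show
    "{arc_src k (j, 6 * m), arc_tgt k (j, 6 * m)} = {(j, m), outer_pred k j m}"
    and "{arc_src k (j, 6 * m + 1), arc_tgt k (j, 6 * m + 1)} = {outer_pred k j m, (j, 3 + m)}"
    and "{arc_src k (j, 6 * m + 2), arc_tgt k (j, 6 * m + 2)} = {(j, m), (j, 3 + m)}"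
    and "{arc_src k (j, 6 * m + 3), arc_tgt k (j, 6 * m + 3)} = {(j, 6 + m), (j, 6 + (m + 2) mod 3)}"
    and "{arc_src k (j, 6 * m + 4), arc_tgt k (j, 6 * m + 4)} = {(j, 6 + (m + 2) mod 3), (j, 3 + m)}"
    and "{arc_src k (j, 6 * m + 5), arc_tgt k (j, 6 * m + 5)} = {(j, 6 + m), (j, 3 + m)}"
    by (simp_all add: arc_src_def arc_tgt_def Let_def insert_commute)
qed

lemma doubleton_in_triple:
  "x \<in> {a, b, c} \<Longrightarrow> y \<in> {a, b, c} \<Longrightarrow> x \<noteq> y \<Longrightarrow> {x, y} = {a, b} \<or> {x, y} = {b, c} \<or> {x, y} = {a, c}"
  by auto

lemma adjacent_edges_joined_by_arc:
  assumes i1: "i1 \<in> gp_edge_index k" and i2: "i2 \<in> gp_edge_index k" and "i1 \<noteq> i2"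
    and "x \<in> gp_edge_at k i1" "x \<in> gp_edge_at k i2"
  shows "\<exists>r\<in>gp_arc_index k. {arc_src k r, arc_tgt k r} = {i1, i2}"
proof -
  have x: "snd x < 3 * k" "i1 \<in> edge_indices_at k x" "i2 \<in> edge_indices_at k x"
    using mem_edge_indices_at assms by blast+
  obtain j m where jm: "j < k" "m < 3" "snd x = m * k + j"
    using x(1) by (rule position_cases)
  have "\<exists>a<6. {arc_src k (j, 6 * m + a), arc_tgt k (j, 6 * m + a)} = {i1, i2}"
  proof (cases "fst x")
    case True
    then have "x = (True, m * k + j)" using jm(3) by (simp add: prod_eq_iff)
    then have "i1 \<in> {(j, 6 + m), (j, 6 + (m + 2) mod 3), (j, 3 + m)}"
        "i2 \<in> {(j, 6 + m), (j, 6 + (m + 2) mod 3), (j, 3 + m)}"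
      using x edge_indices_at_column[OF jm(1,2)] by auto
    from doubleton_in_triple[OF this \<open>i1 \<noteq> i2\<close>] show ?thesis
      using arcs_at_vertex[OF jm(1,2)] by (metis lessI less_Suc_eq numeral_nat)
  next
    case False
    then have "x = (False, m * k + j)" using jm(3) by (simp add: prod_eq_iff)
    then have "i1 \<in> {(j, m), outer_pred k j m, (j, 3 + m)}" "i2 \<in> {(j, m), outer_pred k j m, (j, 3 + m)}"
      using x edge_indices_at_column[OF jm(1,2)] by auto
    from doubleton_in_triple[OF this \<open>i1 \<noteq> i2\<close>] show ?thesis
      using arcs_at_vertex[OF jm(1,2)] by (metis add_0_right lessI less_Suc_eq numeral_nat)
  qed
  then obtain a where "a < 6" "{arc_src k (j, 6 * m + a), arc_tgt k (j, 6 * m + a)} = {i1, i2}" by blast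
  moreover have "(j, 6 * m + a) \<in> gp_arc_index k"
    using \<open>a < 6\<close> jm by (simp add: gp_arc_index_def)
  ultimately show ?thesis by blast
qed

section \<open>Walks and matrix powers\<close>

fun mat_pow :: "('s \<Rightarrow> 's \<Rightarrow> real) \<Rightarrow> 's set \<Rightarrow> nat \<Rightarrow> 's \<Rightarrow> 's \<Rightarrow> real" where
  "mat_pow M X 0 x y = (if x = y then 1 else 0)"
| "mat_pow M X (Suc n) x y = (\<Sum>z\<in>X. mat_pow M X n x z * M z y)"

lemma mat_pow_1:
  assumes "finite X" "x \<in> X"
  shows "mat_pow M X 1 x y = M x y"
proof -
  have "mat_pow M X 1 x y = (\<Sum>z\<in>X. if x = z then M z y else 0)"
    by (simp, intro sum.cong) auto
  then show ?thesis using assms by simp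
qed

definition walk_pred :: "'s \<Rightarrow> (nat \<Rightarrow> 's) \<Rightarrow> nat \<Rightarrow> 's" where
  "walk_pred x0 f j = (if j = 0 then x0 else f (j - 1))"

lemma walk_pred_in:
  "f \<in> PiE {..<Suc m} (\<lambda>_. X) \<Longrightarrow> x0 \<in> X \<Longrightarrow> j < Suc m \<Longrightarrow> walk_pred x0 f j \<in> X"
  by (simp add: walk_pred_def PiE_iff)

lemma sum_PiE_lessThan_Suc:
  assumes "finite X"
  shows "(\<Sum>f\<in>PiE {..<Suc n} (\<lambda>_. X). g f) = (\<Sum>f\<in>PiE {..<n} (\<lambda>_. X). \<Sum>z\<in>X. g (f(n := z)))"
proof -
  have "(\<Sum>f\<in>PiE {..<Suc n} (\<lambda>_. X). g f) = (\<Sum>(f, z)\<in>PiE {..<n} (\<lambda>_. X) \<times> X. g (f(n := z)))"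
    by (rule sum.reindex_bij_witness[of _ "\<lambda>(f, z). f(n := z)" "\<lambda>f. (f(n := undefined), f n)"])
      (auto simp: PiE_def extensional_def Pi_def)
  also have "\<dots> = (\<Sum>f\<in>PiE {..<n} (\<lambda>_. X). \<Sum>z\<in>X. g (f(n := z)))"
    by (subst sum.cartesian_product) auto
  finally show ?thesis .
qed

lemma sum_walks_eq_mat_pow:
  fixes M :: "'s \<Rightarrow> 's \<Rightarrow> real"
  assumes X: "finite X" and x0: "x0 \<in> X"
  shows "(\<Sum>f\<in>PiE {..<Suc m} (\<lambda>_. X). (\<Prod>j<Suc m. M (walk_pred x0 f j) (f j)) * h (f m))
       = (\<Sum>y\<in>X. mat_pow M X (Suc m) x0 y * h y)"
proof (induction m arbitrary: h)
  case 0
  have "mat_pow M X (Suc 0) x0 y = M x0 y" for y using mat_pow_1[OF X x0] by simp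
  then show ?case by (subst sum_PiE_lessThan_Suc[OF X]) (simp add: walk_pred_def)
next
  case (Suc m)
  have step: "(\<Prod>j<Suc (Suc m). M (walk_pred x0 (f(Suc m := z)) j) ((f(Suc m := z)) j))
      = (\<Prod>j<Suc m. M (walk_pred x0 f j) (f j)) * M (f m) z" for f z
  proof -
    have "(\<Prod>j<Suc m. M (walk_pred x0 (f(Suc m := z)) j) ((f(Suc m := z)) j))
        = (\<Prod>j<Suc m. M (walk_pred x0 f j) (f j))"
      by (intro prod.cong) (auto simp: walk_pred_def)
    then show ?thesis unfolding prod.lessThan_Suc[of _ "Suc m"] by (simp add: walk_pred_def)
  qed
  have "(\<Sum>f\<in>PiE {..<Suc (Suc m)} (\<lambda>_. X). (\<Prod>j<Suc (Suc m). M (walk_pred x0 f j) (f j)) * h (f (Suc m)))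
      = (\<Sum>f\<in>PiE {..<Suc m} (\<lambda>_. X). (\<Prod>j<Suc m. M (walk_pred x0 f j) (f j)) * (\<Sum>z\<in>X. M (f m) z * h z))"
    by (subst sum_PiE_lessThan_Suc[OF X]) (simp only: step fun_upd_same sum_distrib_left mult.assoc)
  also have "\<dots> = (\<Sum>y\<in>X. mat_pow M X (Suc m) x0 y * (\<Sum>z\<in>X. M y z * h z))"
    by (rule Suc.IH)
  also have "\<dots> = (\<Sum>z\<in>X. mat_pow M X (Suc (Suc m)) x0 z * h z)"
    by (simp only: mat_pow.simps(2)[of M X "Suc m"] sum_distrib_left sum_distrib_right mult.assoc)
      (rule sum.swap)
  finally show ?case .
qed

lemma sum_twisted_closed_walks_eq_mat_pow:
  fixes M :: "'s \<Rightarrow> 's \<Rightarrow> real"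
  assumes X: "finite X" and \<rho>: "\<forall>y\<in>X. \<rho> y \<in> X"
  shows "(\<Sum>f\<in>PiE {..<Suc m} (\<lambda>_. X). \<Prod>j<Suc m. M (walk_pred (\<rho> (f m)) f j) (f j))
       = (\<Sum>y\<in>X. mat_pow M X (Suc m) (\<rho> y) y)"
proof -
  have "(\<Sum>f\<in>PiE {..<Suc m} (\<lambda>_. X). \<Prod>j<Suc m. M (walk_pred (\<rho> (f m)) f j) (f j))
      = (\<Sum>f\<in>PiE {..<Suc m} (\<lambda>_. X). \<Sum>y\<in>X.
           (\<Prod>j<Suc m. M (walk_pred (\<rho> y) f j) (f j)) * (if f m = y then 1 else 0))"
    using X by (intro sum.cong refl) (auto simp: if_distrib sum.If_cases cong: if_cong)
  also have "\<dots> = (\<Sum>y\<in>X. \<Sum>f\<in>PiE {..<Suc m} (\<lambda>_. X).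
           (\<Prod>j<Suc m. M (walk_pred (\<rho> y) f j) (f j)) * (if f m = y then 1 else 0))"
    by (rule sum.swap)
  also have "\<dots> = (\<Sum>y\<in>X. \<Sum>y'\<in>X. mat_pow M X (Suc m) (\<rho> y) y' * (if y' = y then 1 else 0))"
    using \<rho> by (intro sum.cong refl sum_walks_eq_mat_pow[OF X]) auto
  also have "\<dots> = (\<Sum>y\<in>X. mat_pow M X (Suc m) (\<rho> y) y)"
    using X by (simp add: if_distrib sum.If_cases cong: if_cong)
  finally show ?thesis .
qed

section \<open>The transfer matrix\<close>

definition colour_triples :: "(real \<times> real \<times> real) set" where
  "colour_triples = {0, 1, 2} \<times> {0, 1, 2} \<times> {0, 1, 2}"

lemma mem_colour_triples:
  "a \<in> colour_triples \<longleftrightarrow> fst a \<in> {0, 1, 2} \<and> fst (snd a) \<in> {0, 1, 2} \<and> snd (snd a) \<in> {0, 1, 2}"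
  unfolding colour_triples_def mem_Times_iff ..

lemma finite_colour_triples: "finite colour_triples"
  by (simp add: colour_triples_def)

lemma sum_colour_triples:
  "(\<Sum>z\<in>colour_triples. g z) = (\<Sum>z0\<in>{0, 1, 2}. \<Sum>z1\<in>{0, 1, 2}. \<Sum>z2\<in>{0 :: real, 1, 2}. g (z0, z1, z2))"
  unfolding colour_triples_def sum.cartesian_product by (simp add: case_prod_beta')

definition rotate_triple :: "real \<times> real \<times> real \<Rightarrow> real \<times> real \<times> real" where
  "rotate_triple a = (snd (snd a), fst a, fst (snd a))"

lemma rotate_triple_in_colour_triples: "\<forall>y\<in>colour_triples. rotate_triple y \<in> colour_triples"
  by (auto simp: colour_triples_def rotate_triple_def)

definition grid_denom :: "real \<Rightarrow> real" where
  "grid_denom x = lagrange_denom {0, 1, 2} x"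

lemma grid_denom_simps: "grid_denom 0 = 2" "grid_denom 1 = -1" "grid_denom 2 = 2"
  by (simp_all add: grid_denom_def lagrange_denom_def insert_Diff_if)

definition diff_prod3 :: "real \<Rightarrow> real \<Rightarrow> real \<Rightarrow> real" where
  "diff_prod3 x y z = (x - y) * (x - z) * (y - z)"

text \<open>The sign of (s0, s1, s2) as a permutation of (0, 1, 2), and 0 if two entries agree.\<close>

definition levi_civita :: "real \<Rightarrow> real \<Rightarrow> real \<Rightarrow> real" where
  "levi_civita s0 s1 s2 = (if s0 \<noteq> s1 \<and> s1 \<noteq> s2 \<and> s0 \<noteq> s2
     then (if s1 - s0 = 1 \<or> s1 - s0 = -2 then 1 else -1) else 0)"

definition step_coeff :: "real \<Rightarrow> real \<Rightarrow> real" where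
  "step_coeff a b = (if a = 0 then (if b = 1 then 1 else -1)
     else if a = 1 then (if b = 0 then 1/2 else -1/2) else (if b = 0 then 1 else -1))"

text \<open>Contribution of one column to a summand of the Nullstellensatz sum with all lists
  equal to {0, 1, 2}: a are the outer colours of the previous column, b the outer, s the spoke and
  t the inner colours of this column. Each factor diff_prod3 is the product over the three arcs at
  one vertex, and the denominators are those of the colours of this column.\<close>

definition column_weight ::
    "real \<times> real \<times> real \<Rightarrow> real \<times> real \<times> real \<Rightarrow> (real \<times> real \<times> real) \<times> (real \<times> real \<times> real) \<Rightarrow> real" where
  "column_weight a b y =
     diff_prod3 (fst a) (fst b) (fst (fst y)) * diff_prod3 (snd (snd (snd y))) (fst (snd y)) (fst (fst y))
     * diff_prod3 (fst (snd a)) (fst (snd b)) (fst (snd (fst y)))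
     * diff_prod3 (fst (snd y)) (fst (snd (snd y))) (fst (snd (fst y)))
     * diff_prod3 (snd (snd a)) (snd (snd b)) (snd (snd (fst y)))
     * diff_prod3 (fst (snd (snd y))) (snd (snd (snd y))) (snd (snd (fst y)))
     / (grid_denom (fst b) * grid_denom (fst (snd b)) * grid_denom (snd (snd b))
        * grid_denom (fst (fst y)) * grid_denom (fst (snd (fst y))) * grid_denom (snd (snd (fst y)))
        * grid_denom (fst (snd y)) * grid_denom (fst (snd (snd y))) * grid_denom (snd (snd (snd y))))"

text \<open>Summing the column weight over the spoke and inner colours leaves a 27 \<times> 27 transfer
  matrix. Its closed form and that of its square were found by computation.\<close>

definition transfer :: "real \<times> real \<times> real \<Rightarrow> real \<times> real \<times> real \<Rightarrow> real" where
  "transfer a b = (case a of (a0, a1, a2) \<Rightarrow> case b of (b0, b1, b2) \<Rightarrow>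
     if a0 \<noteq> b0 \<and> a1 \<noteq> b1 \<and> a2 \<noteq> b2
     then 2 * levi_civita (3 - a0 - b0) (3 - a1 - b1) (3 - a2 - b2) * step_coeff a0 b0 * step_coeff a1 b1 * step_coeff a2 b2
     else 0)"

definition transfer_sq :: "real \<times> real \<times> real \<Rightarrow> real \<times> real \<times> real \<Rightarrow> real" where
  "transfer_sq a c = (case a of (a0, a1, a2) \<Rightarrow> case c of (c0, c1, c2) \<Rightarrow>
     if a0 = a1 \<and> a1 = a2 then 0
     else (if c0 = a0 \<and> c1 = a1 \<and> c2 = a2 then -2 else 0)
       + (if c0 = a1 \<and> c1 = a2 \<and> c2 = a0 then 1 else 0) + (if c0 = a2 \<and> c1 = a0 \<and> c2 = a1 then 1 else 0))"

definition outer_factor :: "real \<Rightarrow> real \<Rightarrow> real \<Rightarrow> real" where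
  "outer_factor x a b = diff_prod3 a b x / (grid_denom x * grid_denom b)"

lemma sum_inner_colours:
  "\<forall>s\<in>colour_triples. (\<Sum>t\<in>colour_triples.
      diff_prod3 (snd (snd t)) (fst t) (fst s) * diff_prod3 (fst t) (fst (snd t)) (fst (snd s))
      * diff_prod3 (fst (snd t)) (snd (snd t)) (snd (snd s))
      / (grid_denom (fst t) * grid_denom (fst (snd t)) * grid_denom (snd (snd t))))
    = 2 * levi_civita (fst s) (fst (snd s)) (snd (snd s))"
  unfolding sum_colour_triples
  by (simp add: colour_triples_def diff_prod3_def grid_denom_simps levi_civita_def)

lemma sum_spoke_colours:
  "\<forall>a\<in>colour_triples. \<forall>b\<in>colour_triples. (\<Sum>s\<in>colour_triples.
      outer_factor (fst s) (fst a) (fst b) * outer_factor (fst (snd s)) (fst (snd a)) (fst (snd b))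
      * outer_factor (snd (snd s)) (snd (snd a)) (snd (snd b))
      * (2 * levi_civita (fst s) (fst (snd s)) (snd (snd s))))
    = transfer a b"
  unfolding sum_colour_triples
  by (simp add: colour_triples_def outer_factor_def diff_prod3_def grid_denom_simps levi_civita_def
      transfer_def step_coeff_def)

lemma sum_column_weight:
  assumes "a \<in> colour_triples" "b \<in> colour_triples"
  shows "(\<Sum>y\<in>colour_triples \<times> colour_triples. column_weight a b y) = transfer a b"
proof -
  have "(\<Sum>y\<in>colour_triples \<times> colour_triples. column_weight a b y)
      = (\<Sum>s\<in>colour_triples. outer_factor (fst s) (fst a) (fst b)
          * outer_factor (fst (snd s)) (fst (snd a)) (fst (snd b))
          * outer_factor (snd (snd s)) (snd (snd a)) (snd (snd b))
        * (\<Sum>t\<in>colour_triples.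
          diff_prod3 (snd (snd t)) (fst t) (fst s) * diff_prod3 (fst t) (fst (snd t)) (fst (snd s))
          * diff_prod3 (fst (snd t)) (snd (snd t)) (snd (snd s))
          / (grid_denom (fst t) * grid_denom (fst (snd t)) * grid_denom (snd (snd t)))))"
    unfolding sum.cartesian_product' sum_distrib_left
    by (intro sum.cong refl) (simp add: column_weight_def outer_factor_def times_divide_times_eq mult_ac)
  then show ?thesis
    using assms sum_inner_colours sum_spoke_colours by simp
qed

lemma transfer_squared:
  "\<forall>x\<in>colour_triples. \<forall>y\<in>colour_triples. (\<Sum>z\<in>colour_triples. transfer x z * transfer z y) = transfer_sq x y"
  unfolding sum_colour_triples
  by (simp add: colour_triples_def transfer_def transfer_sq_def levi_civita_def step_coeff_def)

lemma transfer_cubed: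
  "\<forall>x\<in>colour_triples. \<forall>y\<in>colour_triples. (\<Sum>z\<in>colour_triples. transfer_sq x z * transfer z y) = -3 * transfer x y"
  unfolding sum_colour_triples
  by (simp add: colour_triples_def transfer_def transfer_sq_def levi_civita_def step_coeff_def)

lemma mat_pow_transfer_2:
  assumes "x \<in> colour_triples" "y \<in> colour_triples"
  shows "mat_pow transfer colour_triples 2 x y = transfer_sq x y"
proof -
  have "mat_pow transfer colour_triples 2 x y
      = (\<Sum>z\<in>colour_triples. mat_pow transfer colour_triples 1 x z * transfer z y)"
    by (simp add: numeral_2_eq_2 del: mat_pow.simps(1))
  then show ?thesis
    using assms transfer_squared mat_pow_1[OF finite_colour_triples assms(1)] by simp
qed

lemma mat_pow_transfer_add_3:
  assumes "x \<in> colour_triples" "y \<in> colour_triples"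
  shows "mat_pow transfer colour_triples (n + 3) x y = -3 * mat_pow transfer colour_triples (n + 1) x y"
  using assms(2)
proof (induction n arbitrary: y)
  case 0
  have "mat_pow transfer colour_triples 3 x y
      = (\<Sum>z\<in>colour_triples. mat_pow transfer colour_triples 2 x z * transfer z y)"
    by (simp add: numeral_3_eq_3 numeral_2_eq_2 del: mat_pow.simps(1))
  then show ?case
    using 0 assms(1) transfer_cubed mat_pow_transfer_2 mat_pow_1[OF finite_colour_triples assms(1)]
    by simp
next
  case (Suc n)
  have "mat_pow transfer colour_triples (Suc n + 3) x y
      = (\<Sum>z\<in>colour_triples. mat_pow transfer colour_triples (n + 3) x z * transfer z y)"
    by (simp only: add_Suc mat_pow.simps(2))
  also have "\<dots> = (\<Sum>z\<in>colour_triples. -3 * mat_pow transfer colour_triples (n + 1) x z * transfer z y)"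
    by (intro sum.cong refl) (simp add: Suc.IH)
  also have "\<dots> = -3 * mat_pow transfer colour_triples (Suc n + 1) x y"
    by (simp only: add_Suc mat_pow.simps(2) sum_distrib_left mult.assoc)
  finally show ?case .
qed

text \<open>Where column k - 1 wraps around to column 0 the outer edges move up one level, which
  permutes the outer colours cyclically; hence a trace twisted by that rotation.\<close>

definition twisted_trace :: "nat \<Rightarrow> real" where
  "twisted_trace n = (\<Sum>y\<in>colour_triples. mat_pow transfer colour_triples n (rotate_triple y) y)"

lemma twisted_trace_add_3: "twisted_trace (n + 3) = -3 * twisted_trace (n + 1)"
  unfolding twisted_trace_def
  by (simp add: sum_distrib_left mat_pow_transfer_add_3 rotate_triple_in_colour_triples cong: sum.cong)

lemma twisted_trace_1: "twisted_trace 1 = -6"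
proof -
  have "twisted_trace 1 = (\<Sum>y\<in>colour_triples. transfer (rotate_triple y) y)"
    unfolding twisted_trace_def
    using mat_pow_1[OF finite_colour_triples] rotate_triple_in_colour_triples by simp
  also have "\<dots> = -6"
    unfolding sum_colour_triples
    by (simp add: rotate_triple_def transfer_def levi_civita_def step_coeff_def)
  finally show ?thesis .
qed

lemma twisted_trace_2: "twisted_trace 2 = 24"
proof -
  have "twisted_trace 2 = (\<Sum>y\<in>colour_triples. transfer_sq (rotate_triple y) y)"
    unfolding twisted_trace_def using mat_pow_transfer_2 rotate_triple_in_colour_triples by simp
  also have "\<dots> = 24"
    unfolding sum_colour_triples by (simp add: rotate_triple_def transfer_sq_def)
  finally show ?thesis .
qed

lemma twisted_trace_nonzero: "twisted_trace (Suc m) \<noteq> 0"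
proof -
  have "twisted_trace (Suc m) \<noteq> 0 \<and> twisted_trace (Suc (Suc m)) \<noteq> 0"
  proof (induction m)
    case 0
    show ?case using twisted_trace_1 twisted_trace_2 by (simp add: numeral_2_eq_2)
  next
    case (Suc m)
    have "twisted_trace (Suc (Suc (Suc m))) = -3 * twisted_trace (Suc m)"
      using twisted_trace_add_3[of m] by (simp add: numeral_3_eq_3)
    with Suc show ?case by simp
  qed
  then show ?thesis ..
qed

section \<open>The Nullstellensatz sum of GP(3k,k)\<close>

text \<open>Colour of the edge (j, q) when a holds the outer, fst y the spoke and snd y the inner colours
  of column j.\<close>

definition column_entry ::
    "nat \<Rightarrow> real \<times> real \<times> real \<Rightarrow> (real \<times> real \<times> real) \<times> (real \<times> real \<times> real) \<Rightarrow> real" where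
  "column_entry q a y = (if q = 0 then fst a else if q = 1 then fst (snd a) else if q = 2 then snd (snd a)
     else if q = 3 then fst (fst y) else if q = 4 then fst (snd (fst y)) else if q = 5 then snd (snd (fst y))
     else if q = 6 then fst (snd y) else if q = 7 then fst (snd (snd y)) else snd (snd (snd y)))"

definition column_colourings :: "nat \<Rightarrow>
    ((nat \<Rightarrow> real \<times> real \<times> real) \<times> (nat \<Rightarrow> (real \<times> real \<times> real) \<times> (real \<times> real \<times> real))) set" where
  "column_colourings k = PiE {..<k} (\<lambda>_. colour_triples) \<times> PiE {..<k} (\<lambda>_. colour_triples \<times> colour_triples)"

definition colouring_of_columns :: "nat \<Rightarrow>
    (nat \<Rightarrow> real \<times> real \<times> real) \<times> (nat \<Rightarrow> (real \<times> real \<times> real) \<times> (real \<times> real \<times> real))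
    \<Rightarrow> nat \<times> nat \<Rightarrow> real" where
  "colouring_of_columns k p = (\<lambda>(j, q). if j < k \<and> q < 9 then column_entry q (fst p j) (snd p j) else undefined)"

definition columns_of_colouring :: "nat \<Rightarrow> (nat \<times> nat \<Rightarrow> real) \<Rightarrow>
    (nat \<Rightarrow> real \<times> real \<times> real) \<times> (nat \<Rightarrow> (real \<times> real \<times> real) \<times> (real \<times> real \<times> real))" where
  "columns_of_colouring k c =
     ((\<lambda>j. if j < k then (c (j, 0), c (j, 1), c (j, 2)) else undefined),
      (\<lambda>j. if j < k then ((c (j, 3), c (j, 4), c (j, 5)), (c (j, 6), c (j, 7), c (j, 8))) else undefined))"

lemma less_9_cases: "(q :: nat) < 9 \<Longrightarrow> q = 0 \<or> q = 1 \<or> q = 2 \<or> q = 3 \<or> q = 4 \<or> q = 5 \<or> q = 6 \<or> q = 7 \<or> q = 8"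
  by linarith

lemma colouring_of_columns_inverse:
  assumes "c \<in> PiE (gp_edge_index k) (\<lambda>_. {0, 1, 2})"
  shows "colouring_of_columns k (columns_of_colouring k c) = c"
proof
  fix i :: "nat \<times> nat"
  obtain j q where i: "i = (j, q)" by force
  show "colouring_of_columns k (columns_of_colouring k c) i = c i"
  proof (cases "j < k \<and> q < 9")
    case True
    then have "q = 0 \<or> q = 1 \<or> q = 2 \<or> q = 3 \<or> q = 4 \<or> q = 5 \<or> q = 6 \<or> q = 7 \<or> q = 8"
      by (intro less_9_cases) simp
    then show ?thesis
      using True
      by (elim disjE) (simp_all add: i colouring_of_columns_def columns_of_colouring_def column_entry_def)
  next
    case False
    then have "c i = undefined" using assms by (auto simp: i gp_edge_index_def)
    with False show ?thesis by (auto simp: i colouring_of_columns_def)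
  qed
qed

lemma columns_of_colouring_inverse:
  assumes "p \<in> column_colourings k"
  shows "columns_of_colouring k (colouring_of_columns k p) = p"
proof -
  have "fst p \<in> PiE {..<k} (\<lambda>_. colour_triples)" "snd p \<in> PiE {..<k} (\<lambda>_. colour_triples \<times> colour_triples)"
    using assms by (simp_all add: column_colourings_def mem_Times_iff)
  then have "fst p j = undefined" "snd p j = undefined" if "\<not> j < k" for j
    using that by auto
  then show ?thesis
    by (intro prod_eqI ext) (simp_all add: columns_of_colouring_def colouring_of_columns_def column_entry_def)
qed

lemma columns_of_colouring_in:
  assumes "c \<in> PiE (gp_edge_index k) (\<lambda>_. {0, 1, 2})"
  shows "columns_of_colouring k c \<in> column_colourings k"
proof -
  have "c (j, q) \<in> {0, 1, 2}" if "j < k" "q < 9" for j q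
    using assms that by (auto simp: gp_edge_index_def)
  then show ?thesis
    by (simp add: column_colourings_def columns_of_colouring_def mem_colour_triples mem_Times_iff PiE_iff
        extensional_def)
qed

lemma column_entry_in:
  "a \<in> colour_triples \<Longrightarrow> y \<in> colour_triples \<times> colour_triples \<Longrightarrow> column_entry q a y \<in> {0, 1, 2}"
  by (simp add: column_entry_def mem_colour_triples mem_Times_iff)

lemma colouring_of_columns_in:
  assumes "p \<in> column_colourings k"
  shows "colouring_of_columns k p \<in> PiE (gp_edge_index k) (\<lambda>_. {0, 1, 2})"
proof (rule PiE_I)
  fix i assume "i \<in> gp_edge_index k"
  then obtain j q where jq: "i = (j, q)" "j < k" "q < 9" by (auto simp: gp_edge_index_def)
  have "fst p \<in> PiE {..<k} (\<lambda>_. colour_triples)"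
      "snd p \<in> PiE {..<k} (\<lambda>_. colour_triples \<times> colour_triples)"
    using assms by (simp_all add: column_colourings_def mem_Times_iff)
  then have "fst p j \<in> colour_triples" "snd p j \<in> colour_triples \<times> colour_triples"
    using jq(2) by auto
  then have "column_entry q (fst p j) (snd p j) \<in> {0, 1, 2}" by (rule column_entry_in)
  then show "colouring_of_columns k p i \<in> {0, 1, 2}"
    using jq by (simp add: colouring_of_columns_def)
next
  fix i assume "i \<notin> gp_edge_index k"
  then show "colouring_of_columns k p i = undefined"
    by (cases i) (auto simp: colouring_of_columns_def gp_edge_index_def)
qed

lemma sum_colourings_eq_sum_column_colourings:
  "(\<Sum>c\<in>PiE (gp_edge_index k) (\<lambda>_. {0, 1, 2}). g c) = (\<Sum>p\<in>column_colourings k. g (colouring_of_columns k p))"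
  by (rule sum.reindex_bij_witness[of _ "colouring_of_columns k" "columns_of_colouring k"])
    (simp_all add: colouring_of_columns_inverse columns_of_colouring_inverse columns_of_colouring_in
      colouring_of_columns_in)

definition column_factor :: "nat \<Rightarrow> (nat \<times> nat \<Rightarrow> real) \<Rightarrow> nat \<Rightarrow> real" where
  "column_factor k c j = (\<Prod>r<18. c (arc_src k (j, r)) - c (arc_tgt k (j, r))) / (\<Prod>q<9. grid_denom (c (j, q)))"

lemma graph_poly_sum_gp_eq_sum_prod_column_factor:
  "graph_poly_sum (gp_edge_index k) (gp_arc_index k) (arc_src k) (arc_tgt k) (\<lambda>_. {0, 1, 2})
    = (\<Sum>c\<in>PiE (gp_edge_index k) (\<lambda>_. {0, 1, 2}). \<Prod>j<k. column_factor k c j)"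
  unfolding graph_poly_sum_def column_factor_def gp_edge_index_def gp_arc_index_def grid_denom_def
  by (simp add: prod.cartesian_product prod_dividef)

lemma column_factor_colouring_of_columns:
  assumes "j < Suc m"
  shows "column_factor (Suc m) (colouring_of_columns (Suc m) p) j
    = column_weight (walk_pred (rotate_triple (fst p m)) (fst p) j) (fst p j) (snd p j)"
proof (cases "j = 0")
  case True
  then show ?thesis
    by (simp add: column_factor_def lessThan_nat_numeral arc_src_def arc_tgt_def Let_def outer_pred_def
        colouring_of_columns_def column_entry_def column_weight_def walk_pred_def rotate_triple_def
        diff_prod3_def mult_ac)
next
  case False
  have "j - 1 < Suc m" using assms by simp
  with False assms show ?thesis
    by (simp add: column_factor_def lessThan_nat_numeral arc_src_def arc_tgt_def Let_def outer_pred_def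
        colouring_of_columns_def column_entry_def column_weight_def walk_pred_def rotate_triple_def
        diff_prod3_def mult_ac)
qed

lemma graph_poly_sum_gp_eq_twisted_trace:
  "graph_poly_sum (gp_edge_index (Suc m)) (gp_arc_index (Suc m)) (arc_src (Suc m)) (arc_tgt (Suc m))
     (\<lambda>_. {0, 1, 2}) = twisted_trace (Suc m)"
  (is "?sum = _")
proof -
  let ?k = "Suc m" and ?X = colour_triples
  let ?w = "\<lambda>f j. walk_pred (rotate_triple (f m)) f j"
  have "?sum = (\<Sum>p\<in>column_colourings ?k. \<Prod>j<?k. column_factor ?k (colouring_of_columns ?k p) j)"
    unfolding graph_poly_sum_gp_eq_sum_prod_column_factor by (rule sum_colourings_eq_sum_column_colourings)
  also have "\<dots> = (\<Sum>p\<in>column_colourings ?k. \<Prod>j<?k. column_weight (?w (fst p) j) (fst p j) (snd p j))"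
    by (intro sum.cong prod.cong refl) (simp add: column_factor_colouring_of_columns)
  also have "\<dots> = (\<Sum>f\<in>PiE {..<?k} (\<lambda>_. ?X). \<Sum>g\<in>PiE {..<?k} (\<lambda>_. ?X \<times> ?X).
                    \<Prod>j<?k. column_weight (?w f j) (f j) (g j))"
    unfolding column_colourings_def by (simp only: sum.cartesian_product' fst_conv snd_conv)
  also have "\<dots> = (\<Sum>f\<in>PiE {..<?k} (\<lambda>_. ?X). \<Prod>j<?k. \<Sum>y\<in>?X \<times> ?X. column_weight (?w f j) (f j) y)"
    by (intro sum.cong refl prod_sum_PiE[symmetric]) (simp_all add: finite_colour_triples)
  also have "\<dots> = (\<Sum>f\<in>PiE {..<?k} (\<lambda>_. ?X). \<Prod>j<?k. transfer (?w f j) (f j))"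
  proof (intro sum.cong prod.cong refl sum_column_weight)
    fix f j assume f: "f \<in> PiE {..<?k} (\<lambda>_. ?X)" and j: "j \<in> {..<?k}"
    show "f j \<in> ?X" using f j by auto
    show "?w f j \<in> ?X"
      using f j rotate_triple_in_colour_triples by (intro walk_pred_in) auto
  qed
  also have "\<dots> = twisted_trace ?k"
    unfolding twisted_trace_def
    by (rule sum_twisted_closed_walks_eq_mat_pow[OF finite_colour_triples rotate_triple_in_colour_triples])
  finally show ?thesis .
qed

section \<open>Choice index and chromatic index\<close>

lemma proper_edge_colouring_factor:
  assumes "proper_edge_colouring E c" "\<forall>e\<in>E. h (c' e) = c e"
  shows "proper_edge_colouring E c'"
  using assms unfolding proper_edge_colouring_def by metis

lemma gp_edge_index_of_edge:
  assumes "e \<in> gp_edges (3 * k) k"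
  shows "inv_into (gp_edge_index k) (gp_edge_at k) e \<in> gp_edge_index k"
    and "gp_edge_at k (inv_into (gp_edge_index k) (gp_edge_at k) e) = e"
  using assms unfolding gp_edge_at_image[of k, symmetric] by (simp_all add: inv_into_into f_inv_into_f)

lemma proper_edge_colouring_of_arc_colouring:
  assumes "\<forall>r\<in>gp_arc_index k. c (arc_src k r) \<noteq> c (arc_tgt k r)"
  shows "proper_edge_colouring (gp_edges (3 * k) k) (\<lambda>e. c (inv_into (gp_edge_index k) (gp_edge_at k) e))"
  unfolding proper_edge_colouring_def
proof (intro ballI impI)
  let ?index = "inv_into (gp_edge_index k) (gp_edge_at k)"
  fix e e' assume e: "e \<in> gp_edges (3 * k) k" and e': "e' \<in> gp_edges (3 * k) k"
    and adjacent: "e \<noteq> e' \<and> e \<inter> e' \<noteq> {}"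
  note index = gp_edge_index_of_edge[OF e] gp_edge_index_of_edge[OF e']
  obtain x where "x \<in> gp_edge_at k (?index e)" "x \<in> gp_edge_at k (?index e')"
    using adjacent unfolding index(2,4) by blast
  moreover have "?index e \<noteq> ?index e'" using adjacent index(2,4) by metis
  ultimately obtain r where "r \<in> gp_arc_index k" "{arc_src k r, arc_tgt k r} = {?index e, ?index e'}"
    using adjacent_edges_joined_by_arc index(1,3) by blast
  then show "c (?index e) \<noteq> c (?index e')"
    using assms by (auto simp: doubleton_eq_iff)
qed

lemma graph_poly_sum_gp_nonzero:
  "k \<ge> 1 \<Longrightarrow> graph_poly_sum (gp_edge_index k) (gp_arc_index k) (arc_src k) (arc_tgt k) (\<lambda>_. {0, 1, 2}) \<noteq> 0"
  by (cases k) (simp_all add: graph_poly_sum_gp_eq_twisted_trace twisted_trace_nonzero)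

lemma gp_3k_k_choosable:
  assumes k: "k \<ge> 1"
  shows "\<forall>L :: (bool \<times> nat) set \<Rightarrow> nat set. (\<forall>e\<in>gp_edges (3 * k) k. finite (L e) \<and> card (L e) = 3) \<longrightarrow>
    (\<exists>c. proper_edge_colouring (gp_edges (3 * k) k) c \<and> (\<forall>e\<in>gp_edges (3 * k) k. c e \<in> L e))"
proof (intro allI impI)
  fix L :: "(bool \<times> nat) set \<Rightarrow> nat set"
  assume L: "\<forall>e\<in>gp_edges (3 * k) k. finite (L e) \<and> card (L e) = 3"
  let ?E = "gp_edges (3 * k) k" and ?I = "gp_edge_index k"
  let ?index = "inv_into ?I (gp_edge_at k)"
  define L' where "L' i = real ` L (gp_edge_at k i)" for i
  have L': "\<forall>i\<in>?I. finite (L' i) \<and> card (L' i) = 3"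
    using L gp_edge_at_image[of k] by (auto simp: L'_def card_image)
  have finite: "finite ?I" "finite (gp_arc_index k)"
    by (simp_all add: gp_edge_index_def gp_arc_index_def)
  have ends: "\<forall>r\<in>gp_arc_index k. arc_src k r \<in> ?I \<and> arc_tgt k r \<in> ?I"
    using arc_ends_in_gp_edge_index[OF k] by blast
  obtain c where c: "c \<in> PiE ?I L'" and arcs: "\<forall>r\<in>gp_arc_index k. c (arc_src k r) \<noteq> c (arc_tgt k r)"
    by (rule choosable_if_graph_poly_sum_nonzero[OF finite card_gp_arc_index ends graph_poly_sum_gp_nonzero[OF k] L'])
  define col where "col e = nat \<lfloor>c (?index e)\<rfloor>" for e
  have col: "col e \<in> L e \<and> real (col e) = c (?index e)" if e: "e \<in> ?E" for e
  proof -
    have "c (?index e) \<in> L' (?index e)" using c gp_edge_index_of_edge(1)[OF e] by auto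
    then obtain n where "n \<in> L e" "c (?index e) = real n"
      unfolding L'_def gp_edge_index_of_edge(2)[OF e] by blast
    then show ?thesis by (simp add: col_def)
  qed
  have "proper_edge_colouring ?E col"
    using proper_edge_colouring_of_arc_colouring[OF arcs] col
    by (intro proper_edge_colouring_factor[where h = real]) blast+
  with col show "\<exists>c. proper_edge_colouring ?E c \<and> (\<forall>e\<in>?E. c e \<in> L e)" by blast
qed

lemma colours_at_vertex:
  fixes c :: "'a set \<Rightarrow> nat"
  assumes "proper_edge_colouring E c" "\<forall>e\<in>E. c e < l"
    and "e1 \<in> E" "e2 \<in> E" "e3 \<in> E" "distinct [e1, e2, e3]" "v \<in> e1 \<inter> e2 \<inter> e3"
  shows "3 \<le> l"
proof -
  have "c e1 \<noteq> c e2" "c e1 \<noteq> c e3" "c e2 \<noteq> c e3"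
    using assms unfolding proper_edge_colouring_def by (metis disjoint_iff distinct_length_2_or_more IntD1 IntD2)+
  moreover have "c e1 < l" "c e2 < l" "c e3 < l" using assms by auto
  ultimately show ?thesis by linarith
qed

lemma gp_edges_at_u0:
  assumes "k \<ge> 1"
  obtains e1 e2 e3 where "e1 \<in> gp_edges (3 * k) k" "e2 \<in> gp_edges (3 * k) k" "e3 \<in> gp_edges (3 * k) k"
    "distinct [e1, e2, e3]" "(False, 0) \<in> e1 \<inter> e2 \<inter> e3"
proof
  have n: "0 < 3 * k" "3 * k - 1 < 3 * k" "3 * k - 1 \<noteq> 1" "(3 * k - 1 + 1) mod (3 * k) = 0"
    using assms by auto
  show "{(False, 0), (False, (0 + 1) mod (3 * k))} \<in> gp_edges (3 * k) k"
    "{(False, 0), (True, 0)} \<in> gp_edges (3 * k) k"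
    "{(False, 3 * k - 1), (False, (3 * k - 1 + 1) mod (3 * k))} \<in> gp_edges (3 * k) k"
    using gp_edges_memI n by blast+
  show "distinct [{(False, 0), (False, (0 + 1) mod (3 * k))}, {(False, 0), (True, 0)},
      {(False, 3 * k - 1), (False, (3 * k - 1 + 1) mod (3 * k))}]"
    using n assms by (auto simp: doubleton_eq_iff)
qed (use assms in auto)

lemma choice_index_eq_chromatic_index:
  fixes E :: "'a set set"
  assumes choosable: "\<forall>L :: 'a set \<Rightarrow> nat set. (\<forall>e\<in>E. finite (L e) \<and> card (L e) = m) \<longrightarrow>
      (\<exists>c. proper_edge_colouring E c \<and> (\<forall>e\<in>E. c e \<in> L e))"
    and lower: "\<And>(c :: 'a set \<Rightarrow> nat) l. proper_edge_colouring E c \<Longrightarrow> \<forall>e\<in>E. c e < l \<Longrightarrow> m \<le> l"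
  shows "choice_index E = m" "chromatic_index E = m"
proof -
  have colouring_below: "\<exists>c :: 'a set \<Rightarrow> nat. proper_edge_colouring E c \<and> (\<forall>e\<in>E. c e < l)"
    if "\<forall>L :: 'a set \<Rightarrow> nat set. (\<forall>e\<in>E. finite (L e) \<and> card (L e) = l) \<longrightarrow>
      (\<exists>c. proper_edge_colouring E c \<and> (\<forall>e\<in>E. c e \<in> L e))" for l
    using that[rule_format, of "\<lambda>_. {..<l}"] by auto
  show "choice_index E = m"
    unfolding choice_index_def
  proof (rule Least_equality)
    fix l
    assume "\<forall>L :: 'a set \<Rightarrow> nat set. (\<forall>e\<in>E. finite (L e) \<and> card (L e) = l) \<longrightarrow>
      (\<exists>c. proper_edge_colouring E c \<and> (\<forall>e\<in>E. c e \<in> L e))"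
    then obtain c :: "'a set \<Rightarrow> nat" where "proper_edge_colouring E c" "\<forall>e\<in>E. c e < l"
      using colouring_below by blast
    then show "m \<le> l" by (rule lower)
  qed (rule choosable)
  show "chromatic_index E = m"
    unfolding chromatic_index_def
  proof (rule Least_equality)
    fix l assume "\<exists>c :: 'a set \<Rightarrow> nat. proper_edge_colouring E c \<and> (\<forall>e\<in>E. c e < l)"
    then obtain c :: "'a set \<Rightarrow> nat" where "proper_edge_colouring E c" "\<forall>e\<in>E. c e < l" by blast
    then show "m \<le> l" by (rule lower)
  qed (rule colouring_below[OF choosable])
qed

theorem theorem2:
  fixes k :: nat
  assumes "k \<ge> 1"
  shows "choice_index (gp_edges (3 * k) k) = chromatic_index (gp_edges (3 * k) k)"
proof -
  have three_colours: "3 \<le> m"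
    if c: "proper_edge_colouring (gp_edges (3 * k) k) c" "\<forall>e\<in>gp_edges (3 * k) k. c e < m"
    for c :: "(bool \<times> nat) set \<Rightarrow> nat" and m
  proof -
    obtain e1 e2 e3 where "e1 \<in> gp_edges (3 * k) k" "e2 \<in> gp_edges (3 * k) k" "e3 \<in> gp_edges (3 * k) k"
      "distinct [e1, e2, e3]" "(False, 0) \<in> e1 \<inter> e2 \<inter> e3"
      using gp_edges_at_u0[OF assms] .
    then show ?thesis by (rule colours_at_vertex[OF c])
  qed
  show ?thesis
    using choice_index_eq_chromatic_index[OF gp_3k_k_choosable[OF assms] three_colours] by simp
qed

end
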